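(* Let $V_1,\dots,V_N>0$ be fixed strengths and let $(X_{i,j})_{1\le i<j\le N}$ be independent Bernoulli variables under $\mathbb{P}_V$ with $\mathbb{P}_V(X_{i,j}=1)=\frac{V_i}{V_i+V_j}$; set $X_{j,i}=1-X_{i,j}$, $S_i=\sum_{j\ne i}X_{i,j}$ and $Z_N=\max_{1\le i\le N}S_i$. Then for any $a>0$, \[\mathbb{P}_V(Z_N\le a)\le\prod_{i=1}^N\mathbb{P}_V(S_i\le a).\]
   Context: In the paper the strengths are order statistics of i.i.d. positive random variables and the statement is made $\mathbb{P}$-almost surely for the conditional probability $\mathbb{P}_V$ given the strengths; this is equivalent to the statement for arbitrary fixed positive strengths. *)

theory Defs
  imports "HOL-Probability.Probability"
begin

text \<open>Players are indexed by 1..N. The outcome of a tournament is a function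
  on pairs; for 1 \<le> i < j \<le> N the value at (i,j) is True iff X_{i,j} = 1.\<close>

definition pairs :: "nat \<Rightarrow> (nat \<times> nat) set" where
  "pairs N = {(i, j). 1 \<le> i \<and> i < j \<and> j \<le> N}"

definition tournament_pmf :: "nat \<Rightarrow> (nat \<Rightarrow> real) \<Rightarrow> ((nat \<times> nat) \<Rightarrow> bool) pmf" where
  "tournament_pmf N V =
     Pi_pmf (pairs N) False (\<lambda>(i, j). bernoulli_pmf (V i / (V i + V j)))"

definition Xwin :: "((nat \<times> nat) \<Rightarrow> bool) \<Rightarrow> nat \<Rightarrow> nat \<Rightarrow> nat" where
  "Xwin \<omega> i j = (if i < j then (if \<omega> (i, j) then 1 else 0)
                  else (if \<omega> (j, i) then 0 else 1))"

definition score :: "nat \<Rightarrow> ((nat \<times> nat) \<Rightarrow> bool) \<Rightarrow> nat \<Rightarrow> nat" where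
  "score N \<omega> i = (\<Sum>j\<in>{1..N} - {i}. Xwin \<omega> i j)"

definition maxscore :: "nat \<Rightarrow> ((nat \<times> nat) \<Rightarrow> bool) \<Rightarrow> nat" where
  "maxscore N \<omega> = Max (score N \<omega> ` {1..N})"

end

theory Submission
  imports Defs
begin

text \<open>The event \<open>S\<^sub>i \<le> a\<close> can only shrink when player \<open>i\<close> wins a game, only grow
  when \<open>i\<close> loses one, and is unaffected by the other games. Hence for \<open>k \<notin> I\<close> the events
  \<open>S\<^sub>k \<le> a\<close> and \<open>\<forall>i\<in>I. S\<^sub>i \<le> a\<close> are monotone in opposite directions in every game that
  affects both. A Harris-type inequality for product measures on \<open>{0,1}\<^sup>E\<close>, proved by
  conditioning on one coordinate at a time, makes such events negatively correlated, and
  induction over the players gives the product bound.\<close>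

lemma finite_set_Pi_pmf:
  fixes p :: "'a \<Rightarrow> 'b::finite pmf"
  assumes "finite E"
  shows "finite (set_pmf (Pi_pmf E dflt p))"
  using assms by (intro finite_subset[OF set_Pi_pmf_subset'] finite_PiE_dflt) auto

lemma expectation_pair_pmf_finite:
  fixes h :: "'a \<times> 'b \<Rightarrow> real"
  assumes fA: "finite (set_pmf A)" and fB: "finite (set_pmf B)"
  shows "measure_pmf.expectation (pair_pmf A B) h
       = measure_pmf.expectation A (\<lambda>a. measure_pmf.expectation B (\<lambda>b. h (a, b)))"
proof -
  have "measure_pmf.expectation (pair_pmf A B) h
      = (\<Sum>x\<in>set_pmf A \<times> set_pmf B. h x * pmf (pair_pmf A B) x)"
    using fA fB by (intro integral_measure_pmf_real) auto
  also have "\<dots> = (\<Sum>a\<in>set_pmf A. (\<Sum>b\<in>set_pmf B. h (a, b) * pmf B b) * pmf A a)"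
    unfolding sum.cartesian_product sum_distrib_right
    by (intro sum.cong) (auto simp: pmf_pair mult_ac)
  also have "\<dots> = measure_pmf.expectation A (\<lambda>a. measure_pmf.expectation B (\<lambda>b. h (a, b)))"
    using fA fB by (subst integral_measure_pmf_real[of "set_pmf A"])
      (auto intro!: sum.cong simp: integral_measure_pmf_real[of "set_pmf B"])
  finally show ?thesis .
qed

lemma expectation_Pi_pmf_insert_bool:
  fixes H :: "('e \<Rightarrow> bool) \<Rightarrow> real"
  assumes "finite E" "e \<notin> E"
  shows "measure_pmf.expectation (Pi_pmf (insert e E) dflt p) H
    = pmf (p e) True * measure_pmf.expectation (Pi_pmf E dflt p) (\<lambda>w. H (w(e := True)))
      + pmf (p e) False * measure_pmf.expectation (Pi_pmf E dflt p) (\<lambda>w. H (w(e := False)))"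
proof -
  let ?P = "Pi_pmf E dflt p"
  have "measure_pmf.expectation (Pi_pmf (insert e E) dflt p) H
      = measure_pmf.expectation (pair_pmf (p e) ?P) (\<lambda>(y, w). H (w(e := y)))"
    using assms by (simp add: Pi_pmf_insert case_prod_unfold)
  also have "\<dots> = measure_pmf.expectation (p e) (\<lambda>y. measure_pmf.expectation ?P (\<lambda>w. H (w(e := y))))"
    using assms by (simp add: expectation_pair_pmf_finite finite_set_Pi_pmf)
  finally show ?thesis
    by (simp add: integral_measure_pmf[of UNIV] UNIV_bool add.commute)
qed

definition increasing_in :: "'e \<Rightarrow> (('e \<Rightarrow> bool) \<Rightarrow> real) \<Rightarrow> bool" where
  "increasing_in e F \<longleftrightarrow> (\<forall>w. F (w(e := False)) \<le> F (w(e := True)))"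

definition decreasing_in :: "'e \<Rightarrow> (('e \<Rightarrow> bool) \<Rightarrow> real) \<Rightarrow> bool" where
  "decreasing_in e F \<longleftrightarrow> (\<forall>w. F (w(e := True)) \<le> F (w(e := False)))"

definition constant_in :: "'e \<Rightarrow> (('e \<Rightarrow> bool) \<Rightarrow> real) \<Rightarrow> bool" where
  "constant_in e F \<longleftrightarrow> (\<forall>w. F (w(e := True)) = F (w(e := False)))"

definition oppositely_monotone ::
    "'e set \<Rightarrow> (('e \<Rightarrow> bool) \<Rightarrow> real) \<Rightarrow> (('e \<Rightarrow> bool) \<Rightarrow> real) \<Rightarrow> bool" where
  "oppositely_monotone E F G \<longleftrightarrow> (\<forall>e\<in>E. constant_in e F \<or> constant_in e G \<or>
     increasing_in e F \<and> decreasing_in e G \<or> decreasing_in e F \<and> increasing_in e G)"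

lemma oppositely_monotone_fun_upd:
  assumes "oppositely_monotone (insert e E) F G" "e \<notin> E"
  shows "oppositely_monotone E (\<lambda>w. F (w(e := x))) (\<lambda>w. G (w(e := x)))"
proof -
  have "w(e' := y, e := x) = (w(e := x))(e' := y)" if "e' \<in> E" for e' w y
    using that assms(2) by (intro fun_upd_twist) auto
  then show ?thesis
    using assms(1)
    unfolding oppositely_monotone_def increasing_in_def decreasing_in_def constant_in_def
    by auto
qed

lemma convex_combination_mult_le:
  fixes t a0 a1 b0 b1 :: real
  assumes "0 \<le> t" "t \<le> 1" "(a1 - a0) * (b1 - b0) \<le> 0"
  shows "t * (a1 * b1) + (1 - t) * (a0 * b0) \<le> (t * a1 + (1 - t) * a0) * (t * b1 + (1 - t) * b0)"
proof -
  have "(t * a1 + (1 - t) * a0) * (t * b1 + (1 - t) * b0) - (t * (a1 * b1) + (1 - t) * (a0 * b0))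
      = - (t * (1 - t)) * ((a1 - a0) * (b1 - b0))"
    by (simp add: algebra_simps)
  also have "\<dots> \<ge> 0"
    using assms by (intro mult_nonpos_nonpos) auto
  finally show ?thesis by simp
qed

lemma expectation_fun_upd_opposite:
  fixes F G :: "('e \<Rightarrow> bool) \<Rightarrow> real" and P :: "('e \<Rightarrow> bool) pmf"
  assumes "finite (set_pmf P)" "oppositely_monotone {e} F G"
  defines "a x \<equiv> measure_pmf.expectation P (\<lambda>w. F (w(e := x)))"
    and "b x \<equiv> measure_pmf.expectation P (\<lambda>w. G (w(e := x)))"
  shows "(a True - a False) * (b True - b False) \<le> 0"
proof -
  have mono: "(\<And>w. f w \<le> g w) \<Longrightarrow> measure_pmf.expectation P f \<le> measure_pmf.expectation P g"
    for f g :: "('e \<Rightarrow> bool) \<Rightarrow> real"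
    using assms(1) by (intro integral_mono integrable_measure_pmf_finite)
  have "a False \<le> a True" if "increasing_in e F"
    using that unfolding a_def increasing_in_def by (intro mono) auto
  moreover have "a True \<le> a False" if "decreasing_in e F"
    using that unfolding a_def decreasing_in_def by (intro mono) auto
  moreover have "a True = a False" if "constant_in e F"
    using that unfolding a_def constant_in_def by simp
  moreover have "b False \<le> b True" if "increasing_in e G"
    using that unfolding b_def increasing_in_def by (intro mono) auto
  moreover have "b True \<le> b False" if "decreasing_in e G"
    using that unfolding b_def decreasing_in_def by (intro mono) auto
  moreover have "b True = b False" if "constant_in e G"
    using that unfolding b_def constant_in_def by simp
  ultimately show ?thesis
    using assms(2) by (auto simp: oppositely_monotone_def mult_le_0_iff)
qed

lemma expectation_mult_le_oppositely_monotone: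
  fixes F G :: "('e \<Rightarrow> bool) \<Rightarrow> real"
  assumes "finite E" "oppositely_monotone E F G"
  shows "measure_pmf.expectation (Pi_pmf E dflt p) (\<lambda>w. F w * G w)
    \<le> measure_pmf.expectation (Pi_pmf E dflt p) F * measure_pmf.expectation (Pi_pmf E dflt p) G"
  using assms
proof (induction E arbitrary: F G rule: finite_induct)
  case empty
  then show ?case by simp
next
  case (insert e E)
  let ?Ex = "measure_pmf.expectation (Pi_pmf E dflt p)"
  define t where "t = pmf (p e) True"
  define a where "a x = ?Ex (\<lambda>w. F (w(e := x)))" for x
  define b where "b x = ?Ex (\<lambda>w. G (w(e := x)))" for x
  have t: "0 \<le> t" "t \<le> 1"
    unfolding t_def by (simp_all add: pmf_le_1)
  have IH: "?Ex (\<lambda>w. F (w(e := x)) * G (w(e := x))) \<le> a x * b x" for x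
    using insert.IH[of "\<lambda>w. F (w(e := x))" "\<lambda>w. G (w(e := x))"]
      oppositely_monotone_fun_upd[OF insert.prems insert.hyps(2)]
    unfolding a_def b_def by simp
  have opposite: "(a True - a False) * (b True - b False) \<le> 0"
    using insert.prems unfolding a_def b_def
    by (intro expectation_fun_upd_opposite finite_set_Pi_pmf insert.hyps(1))
      (simp add: oppositely_monotone_def)
  have split: "measure_pmf.expectation (Pi_pmf (insert e E) dflt p) H
      = t * ?Ex (\<lambda>w. H (w(e := True))) + (1 - t) * ?Ex (\<lambda>w. H (w(e := False)))" for H
    using expectation_Pi_pmf_insert_bool[OF insert.hyps] by (simp add: t_def pmf_False_conv_True)
  have "measure_pmf.expectation (Pi_pmf (insert e E) dflt p) (\<lambda>w. F w * G w)
      \<le> t * (a True * b True) + (1 - t) * (a False * b False)"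
    unfolding split using IH t by (intro add_mono mult_left_mono) auto
  also have "\<dots> \<le> (t * a True + (1 - t) * a False) * (t * b True + (1 - t) * b False)"
    using t opposite by (intro convex_combination_mult_le)
  also have "\<dots> = measure_pmf.expectation (Pi_pmf (insert e E) dflt p) F
      * measure_pmf.expectation (Pi_pmf (insert e E) dflt p) G"
    unfolding split a_def b_def ..
  finally show ?case .
qed

lemma prob_Int_le_mult_oppositely_monotone:
  assumes "finite E" "oppositely_monotone E (indicator A) (indicator B)"
  shows "measure_pmf.prob (Pi_pmf E dflt p) (A \<inter> B)
    \<le> measure_pmf.prob (Pi_pmf E dflt p) A * measure_pmf.prob (Pi_pmf E dflt p) B"
  using expectation_mult_le_oppositely_monotone[OF assms, of dflt p]
  by (simp add: indicator_inter_arith[symmetric])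

lemma increasing_in_indicator:
  "(\<And>w. w(e := False) \<in> A \<Longrightarrow> w(e := True) \<in> A) \<Longrightarrow> increasing_in e (indicator A)"
  unfolding increasing_in_def indicator_def by auto

lemma decreasing_in_indicator:
  "(\<And>w. w(e := True) \<in> A \<Longrightarrow> w(e := False) \<in> A) \<Longrightarrow> decreasing_in e (indicator A)"
  unfolding decreasing_in_def indicator_def by auto

lemma constant_in_indicator:
  "(\<And>w. w(e := True) \<in> A \<longleftrightarrow> w(e := False) \<in> A) \<Longrightarrow> constant_in e (indicator A)"
  unfolding constant_in_def indicator_def by auto

definition scores_le :: "nat \<Rightarrow> real \<Rightarrow> nat set \<Rightarrow> ((nat \<times> nat) \<Rightarrow> bool) set" where
  "scores_le N a I = {\<omega>. \<forall>i\<in>I. real (score N \<omega> i) \<le> a}"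

lemma score_fun_upd_other:
  assumes "i \<noteq> u" "i \<noteq> v"
  shows "score N (w((u, v) := b)) i = score N w i"
  unfolding score_def using assms by (intro sum.cong) (auto simp: Xwin_def)

lemma score_fun_upd_winner_mono:
  assumes "u < v"
  shows "score N (w((u, v) := False)) u \<le> score N (w((u, v) := True)) u"
  unfolding score_def using assms by (intro sum_mono) (auto simp: Xwin_def)

lemma score_fun_upd_loser_antimono:
  assumes "u < v"
  shows "score N (w((u, v) := True)) v \<le> score N (w((u, v) := False)) v"
  unfolding score_def using assms by (intro sum_mono) (auto simp: Xwin_def)

lemma decreasing_in_scores_le:
  assumes "u < v" "v \<notin> I"
  shows "decreasing_in (u, v) (indicator (scores_le N a I))"
proof (rule decreasing_in_indicator)
  fix w :: "nat \<times> nat \<Rightarrow> bool"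
  assume won: "w((u, v) := True) \<in> scores_le N a I"
  have "real (score N (w((u, v) := False)) i) \<le> a" if "i \<in> I" for i
  proof (cases "i = u")
    case True
    then show ?thesis
      using won that score_fun_upd_winner_mono[OF assms(1), of N w]
      by (force simp: scores_le_def)
  next
    case False
    moreover have "i \<noteq> v"
      using that assms(2) by blast
    ultimately show ?thesis
      using won that by (auto simp: scores_le_def score_fun_upd_other)
  qed
  then show "w((u, v) := False) \<in> scores_le N a I"
    by (simp add: scores_le_def)
qed

lemma increasing_in_scores_le:
  assumes "u < v" "u \<notin> I"
  shows "increasing_in (u, v) (indicator (scores_le N a I))"
proof (rule increasing_in_indicator)
  fix w :: "nat \<times> nat \<Rightarrow> bool"
  assume lost: "w((u, v) := False) \<in> scores_le N a I"
  have "real (score N (w((u, v) := True)) i) \<le> a" if "i \<in> I" for i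
  proof (cases "i = v")
    case True
    then show ?thesis
      using lost that score_fun_upd_loser_antimono[OF assms(1), of N w]
      by (force simp: scores_le_def)
  next
    case False
    moreover have "i \<noteq> u"
      using that assms(2) by blast
    ultimately show ?thesis
      using lost that by (auto simp: scores_le_def score_fun_upd_other)
  qed
  then show "w((u, v) := True) \<in> scores_le N a I"
    by (simp add: scores_le_def)
qed

lemma constant_in_scores_le:
  assumes "u \<notin> I" "v \<notin> I"
  shows "constant_in (u, v) (indicator (scores_le N a I))"
proof (rule constant_in_indicator)
  fix w :: "nat \<times> nat \<Rightarrow> bool"
  have "score N (w((u, v) := True)) i = score N (w((u, v) := False)) i" if "i \<in> I" for i
    using that assms by (metis score_fun_upd_other)
  then show "w((u, v) := True) \<in> scores_le N a I \<longleftrightarrow> w((u, v) := False) \<in> scores_le N a I"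
    by (simp add: scores_le_def)
qed

lemma oppositely_monotone_scores_le:
  assumes "k \<notin> I"
  shows "oppositely_monotone (pairs N) (indicator (scores_le N a {k})) (indicator (scores_le N a I))"
  using assms unfolding oppositely_monotone_def pairs_def
  by (force intro: constant_in_scores_le increasing_in_scores_le decreasing_in_scores_le)

lemma finite_pairs: "finite (pairs N)"
  by (rule finite_subset[of _ "{1..N} \<times> {1..N}"]) (auto simp: pairs_def)

lemma prob_scores_le_le_prod:
  assumes "finite I"
  shows "measure_pmf.prob (Pi_pmf (pairs N) dflt p) (scores_le N a I)
    \<le> (\<Prod>i\<in>I. measure_pmf.prob (Pi_pmf (pairs N) dflt p) (scores_le N a {i}))"
  using assms
proof (induction I rule: finite_induct)
  case empty
  then show ?case by (simp add: scores_le_def)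
next
  case (insert k I)
  let ?prob = "measure_pmf.prob (Pi_pmf (pairs N) dflt p)"
  have "scores_le N a (insert k I) = scores_le N a {k} \<inter> scores_le N a I"
    by (auto simp: scores_le_def)
  then have "?prob (scores_le N a (insert k I)) \<le> ?prob (scores_le N a {k}) * ?prob (scores_le N a I)"
    using insert.hyps(2)
    by (simp add: prob_Int_le_mult_oppositely_monotone finite_pairs oppositely_monotone_scores_le)
  also have "\<dots> \<le> ?prob (scores_le N a {k}) * (\<Prod>i\<in>I. ?prob (scores_le N a {i}))"
    by (intro mult_left_mono insert.IH) simp
  finally show ?case
    using insert.hyps by simp
qed

lemma maxscore_le_iff:
  assumes "N \<ge> 1"
  shows "real (maxscore N w) \<le> a \<longleftrightarrow> (\<forall>i\<in>{1..N}. real (score N w i) \<le> a)"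
proof -
  have "real (maxscore N w) = Max (real ` score N w ` {1..N})"
    unfolding maxscore_def using assms by (intro mono_Max_commute) (auto intro: monoI)
  then show ?thesis
    using assms by (simp add: Max_le_iff)
qed

theorem lemma8:
  fixes N :: nat and V :: "nat \<Rightarrow> real" and a :: real
  assumes "N \<ge> 1"
    and "\<And>i. i \<in> {1..N} \<Longrightarrow> V i > 0"
    and "a > 0"
  shows "measure_pmf.prob (tournament_pmf N V) {\<omega>. real (maxscore N \<omega>) \<le> a}
         \<le> (\<Prod>i\<in>{1..N}. measure_pmf.prob (tournament_pmf N V) {\<omega>. real (score N \<omega> i) \<le> a})"
proof -
  have "{\<omega>. real (maxscore N \<omega>) \<le> a} = scores_le N a {1..N}"
    using maxscore_le_iff[OF assms(1)] by (auto simp: scores_le_def)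
  moreover have "{\<omega>. real (score N \<omega> i) \<le> a} = scores_le N a {i}" for i
    by (simp add: scores_le_def)
  ultimately show ?thesis
    unfolding tournament_pmf_def by (simp add: prob_scores_le_le_prod)
qed

end
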